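(* Let $P$ be a convex polygon, let $\mathcal{R}$ be the smallest axis-parallel rectangle containing $P$, with side lengths $L\ge W>0$, and let $r=\frac14\sqrt{L^2+4W^2}$. Suppose that two vertices of $P$ coincide with two opposite (non-adjacent) corners of $\mathcal{R}$. Then $r\le 2\,r_{opt}(P)$.
   Context: For a compact set $X\subset\mathbb{R}^2$, $r_{opt}(X)$ denotes the minimum $r$ such that two closed disks of radius $r$ have union containing $X$. The number $r$ is the radius of the two congruent disks circumscribing the two halves $\frac L2\times W$ of $\mathcal{R}$. *)

theory Defs
  imports "HOL-Analysis.Analysis"
begin

text \<open>Points of the plane are modelled as real \<times> real (product metric = Euclidean metric).\<close>

definition convex_polygon :: "(real \<times> real) set \<Rightarrow> bool" where
  "convex_polygon P \<longleftrightarrow> (\<exists>S. finite S \<and> P = convex hull S) \<and> interior P \<noteq> {}"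

definition xlo :: "(real \<times> real) set \<Rightarrow> real" where "xlo X = Inf (fst ` X)"
definition xhi :: "(real \<times> real) set \<Rightarrow> real" where "xhi X = Sup (fst ` X)"
definition ylo :: "(real \<times> real) set \<Rightarrow> real" where "ylo X = Inf (snd ` X)"
definition yhi :: "(real \<times> real) set \<Rightarrow> real" where "yhi X = Sup (snd ` X)"

definition bounding_rect :: "(real \<times> real) set \<Rightarrow> (real \<times> real) set" where
  "bounding_rect X = {xlo X..xhi X} \<times> {ylo X..yhi X}"

definition r_opt :: "(real \<times> real) set \<Rightarrow> real" where
  "r_opt X = Inf {r. 0 \<le> r \<and> (\<exists>c1 c2. X \<subseteq> cball c1 r \<union> cball c2 r)}"

end

theory Submission
  imports Defs
begin

text \<open>Any two points of a connected set are at distance at most 4\<rho> once the set is covered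
  by two closed balls of radius \<rho>: either both points lie in one ball, or connectedness forces
  the two balls to meet inside the set, and the path from A via the first centre, a common point
  and the second centre to B has length at most 4\<rho>. Two opposite corners of the bounding
  rectangle are vertices of the convex polygon, so the whole diagonal, of length
  sqrt (L^2 + W^2), lies in the polygon; hence r_opt is at least sqrt (L^2 + W^2) / 4, which is
  at least r / 2.\<close>

lemma dist_le_via_meeting_cballs:
  fixes A B c d :: "'a :: metric_space"
  assumes "A \<in> cball c \<rho>" "B \<in> cball d \<rho>" "p \<in> cball c \<rho>" "p \<in> cball d \<rho>"
  shows "dist A B \<le> 4 * \<rho>"
proof -
  have "dist A B \<le> dist A c + dist c p + dist p d + dist d B"
    by (smt (verit) dist_triangle)
  then show ?thesis
    using assms by (simp add: dist_commute)
qed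

lemma connected_in_two_cballs_dist_le:
  fixes S :: "'a :: metric_space set"
  assumes "connected S" "A \<in> S" "B \<in> S" "S \<subseteq> cball c1 \<rho> \<union> cball c2 \<rho>"
  shows "dist A B \<le> 4 * \<rho>"
proof -
  obtain c d p where "A \<in> cball c \<rho>" "B \<in> cball d \<rho>" "p \<in> cball c \<rho>" "p \<in> cball d \<rho>"
  proof (cases "cball c1 \<rho> \<inter> S = {} \<or> cball c2 \<rho> \<inter> S = {}")
    case True
    then obtain c where "S \<subseteq> cball c \<rho>"
      using assms(4) by blast
    then show ?thesis
      using that[of c c A] assms(2,3) by blast
  next
    case False
    then obtain p where p: "p \<in> cball c1 \<rho>" "p \<in> cball c2 \<rho>"
      using connected_closedD[OF assms(1) _ assms(4)] by blast
    consider "A \<in> cball c1 \<rho>" | "A \<in> cball c2 \<rho>"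
      using assms(2,4) by blast
    moreover consider "B \<in> cball c1 \<rho>" | "B \<in> cball c2 \<rho>"
      using assms(3,4) by blast
    ultimately show ?thesis
      using that p by metis
  qed
  then show ?thesis
    by (rule dist_le_via_meeting_cballs)
qed

lemma dist_le_4_r_opt:
  assumes "bounded X" "connected X" "A \<in> X" "B \<in> X"
  shows "dist A B \<le> 4 * r_opt X"
proof -
  let ?T = "{r. 0 \<le> r \<and> (\<exists>c1 c2. X \<subseteq> cball c1 r \<union> cball c2 r)}"
  obtain c e where "X \<subseteq> cball c e" "0 \<le> e"
    using assms(1) bounded_subset_cball by blast
  then have "?T \<noteq> {}"
    by blast
  moreover have "dist A B / 4 \<le> t" if "t \<in> ?T" for t
    using that assms(2-4) connected_in_two_cballs_dist_le by fastforce
  ultimately have "dist A B / 4 \<le> r_opt X"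
    unfolding r_opt_def by (rule cInf_greatest)
  then show ?thesis
    by simp
qed

theorem lemma3:
  fixes P :: "(real \<times> real) set" and L W r :: real
  assumes "convex_polygon P"
    and "L = max (xhi P - xlo P) (yhi P - ylo P)"
    and "W = min (xhi P - xlo P) (yhi P - ylo P)"
    and "W > 0"
    and "r = sqrt (L\<^sup>2 + 4 * W\<^sup>2) / 4"
    and "((xlo P, ylo P) extreme_point_of P \<and> (xhi P, yhi P) extreme_point_of P) \<or>
         ((xlo P, yhi P) extreme_point_of P \<and> (xhi P, ylo P) extreme_point_of P)"
  shows "r \<le> 2 * r_opt P"
proof -
  obtain S where "finite S" "P = convex hull S"
    using assms(1) unfolding convex_polygon_def by auto
  then have "convex P" "bounded P"
    by (simp_all add: compact_imp_bounded compact_convex_hull finite_imp_compact)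
  have diagonal: "L\<^sup>2 + W\<^sup>2 = (xhi P - xlo P)\<^sup>2 + (yhi P - ylo P)\<^sup>2"
    using assms(2,3) by (auto simp: max_def min_def)
  obtain A B where "A \<in> P" "B \<in> P" "dist A B = sqrt (L\<^sup>2 + W\<^sup>2)"
    using assms(6) unfolding diagonal
    by (auto simp: extreme_point_of_def dist_Pair_Pair dist_real_def power2_commute)
  then have "sqrt (L\<^sup>2 + W\<^sup>2) \<le> 4 * r_opt P"
    using \<open>convex P\<close> \<open>bounded P\<close> convex_connected dist_le_4_r_opt by metis
  moreover have "sqrt (L\<^sup>2 + 4 * W\<^sup>2) \<le> sqrt (2\<^sup>2 * (L\<^sup>2 + W\<^sup>2))"
    by (rule real_sqrt_le_mono) simp
  ultimately show ?thesis
    using assms(5) by (simp only: real_sqrt_mult real_sqrt_abs)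
qed

end
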